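(* Let $(\mathcal T(n))_{n\in\mathbb N}$ be the triangle Markov chain obtained by iterated random barycentric subdivision started from an arbitrary triangle $\mathcal T(0)$, and let $(X_n,Y_n)$ be the characterizing point of $\mathcal T(n)$. There exists a constant $\chi>0$ (not depending on $\mathcal T(0)$) such that almost surely $$\limsup_{n\to\infty}\frac1n\ln(Y_n)\le-\chi .$$
   Context: A triangle is given by three points of the plane which are not all equal (degenerate triangles with collinear vertices are allowed). Barycentric subdivision: if a triangle has vertices $A,B,C$, let $D,E,F$ be the midpoints of $[A,B],[B,C],[C,A]$ and $G$ its barycenter; the medians cut it into the six triangles $\{A,D,G\},\{D,B,G\},\{B,E,G\},\{E,C,G\},\{C,F,G\},\{F,A,G\}$. The triangle Markov chain: $\mathcal T(0)$ is given and, for each $n$, $\mathcal T(n+1)$ is chosen uniformly at random among the six triangles of the barycentric subdivision of $\mathcal T(n)$, independently of all previous choices. Characterizing point: for any triangle there is a similitude of the plane mapping it onto a triangle with vertices $(0,0)$, $(1,0)$, $(x,y)$, with $0\le x\le 1/2$, $y\ge 0$, sending its longest edge onto $[(0,0),(1,0)]$ and its shortest edge onto $[(0,0),(x,y)]$; the point $(x,y)$ is uniquely determined and is called the characterizing point of the triangle. The triangle is flat iff $y=0$. Convention $\ln 0=-\infty$. *)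

theory Defs
  imports "HOL-Probability.Probability" "HOL-Probability.Stream_Space"
begin

type_synonym tri = "complex \<times> complex \<times> complex"

definition nondeg :: "tri \<Rightarrow> bool" where
  "nondeg t = (case t of (A, B, C) \<Rightarrow> \<not> (A = B \<and> B = C))"

definition similitude :: "(complex \<Rightarrow> complex) \<Rightarrow> bool" where
  "similitude f \<longleftrightarrow> (\<exists>a b. a \<noteq> 0 \<and>
      ((\<forall>z. f z = a * z + b) \<or> (\<forall>z. f z = a * cnj z + b)))"

text \<open>Characterizing point (x,y) = x + i y: a similitude maps the vertices onto
0, 1, p with 0 <= x <= 1/2, y >= 0 and |p - 1| <= 1, i.e. |p| <= |p - 1| <= 1, so that
the longest edge goes to [0,1] and the shortest to [0,p].\<close>
definition char_point :: "tri \<Rightarrow> complex" where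
  "char_point t = (case t of (A, B, C) \<Rightarrow>
     THE p. 0 \<le> Re p \<and> Re p \<le> 1/2 \<and> 0 \<le> Im p \<and> cmod (p - 1) \<le> 1 \<and>
            (\<exists>f. similitude f \<and> f ` {A, B, C} = {0, 1, p}))"

definition subdiv :: "tri \<Rightarrow> nat \<Rightarrow> tri" where
  "subdiv t k = (case t of (A, B, C) \<Rightarrow>
     (let D = (A + B) / 2; E = (B + C) / 2; F = (C + A) / 2; G = (A + B + C) / 3 in
      [(A, D, G), (D, B, G), (B, E, G), (E, C, G), (C, F, G), (F, A, G)] ! k))"

fun tri_chain :: "tri \<Rightarrow> nat stream \<Rightarrow> nat \<Rightarrow> tri" where
  "tri_chain T0 \<omega> 0 = T0"
| "tri_chain T0 \<omega> (Suc n) = subdiv (tri_chain T0 \<omega> n) (\<omega> !! n)"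

definition choice_space :: "nat stream measure" where
  "choice_space = stream_space (measure_pmf (pmf_of_set {0..<6}))"

definition lnE :: "real \<Rightarrow> ereal" where
  "lnE y = (if y \<le> 0 then -\<infinity> else ereal (ln y))"

end

theory Submission
  imports Defs
begin

text \<open>
  Write s and t for the horizontal components of the edges B - A and C - A of a triangle, let
  Q = s^2 - s t + t^2 (half the sum of the squared horizontal components of the three edges) and let
  d be twice its signed area. Every child of the barycentric subdivision has area d/6, and its
  form Q is q_k(s,t)/36 for an explicit quadratic form q_k. Hence V = sqrt(|d|/Q) satisfies
  E[V(child)] = V * (1/6) sum_k sqrt(6Q/q_k(s,t)), and the right-hand factor, a function of t/s
  alone, is at most 99/100. So E V(T(n)) decays like (99/100)^n, and by Borel--Cantelli
  V(T(n)) < (199/200)^n eventually, almost surely. Finally the characterizing point has height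
  Y = |d|/(longest edge)^2 <= 3/2 V^2, since Q is at most 3/2 times the squared longest edge.
\<close>

section \<open>The characterizing point\<close>

definition cross :: "complex \<Rightarrow> complex \<Rightarrow> complex \<Rightarrow> real" where
  "cross u v w = Im (cnj (v - u) * (w - u))"

definition sq_edge_sum :: "complex \<Rightarrow> complex \<Rightarrow> complex \<Rightarrow> real" where
  "sq_edge_sum u v w = cmod (u - v)^2 + cmod (v - w)^2 + cmod (w - u)^2"

definition max_sq_edge :: "complex \<Rightarrow> complex \<Rightarrow> complex \<Rightarrow> real" where
  "max_sq_edge A B C = max (cmod (B - A)^2) (max (cmod (C - B)^2) (cmod (A - C)^2))"

definition is_char_point :: "complex \<Rightarrow> complex \<Rightarrow> complex \<Rightarrow> complex \<Rightarrow> bool" where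
  "is_char_point A B C p \<longleftrightarrow> 0 \<le> Re p \<and> Re p \<le> 1/2 \<and> 0 \<le> Im p \<and> cmod (p - 1) \<le> 1 \<and>
     (\<exists>f. similitude f \<and> f ` {A, B, C} = {0, 1, p})"

lemma char_point_eq: "char_point (A, B, C) = (THE p. is_char_point A B C p)"
  by (simp add: char_point_def is_char_point_def)

lemma similitude_scaling:
  assumes "similitude f"
  obtains r where "0 < r" "\<And>z w. cmod (f z - f w) = r * cmod (z - w)"
    "\<And>u v w. \<bar>cross (f u) (f v) (f w)\<bar> = r^2 * \<bar>cross u v w\<bar>"
proof -
  have Im_mult_of_real: "Im (of_real r * z) = r * Im z" and Im_cnj: "Im (cnj z) = - Im z" for r z
    by simp_all
  obtain a b where a: "a \<noteq> 0" and f: "(\<forall>z. f z = a * z + b) \<or> (\<forall>z. f z = a * cnj z + b)"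
    using assms unfolding similitude_def by blast
  have aa: "cnj a * a = of_real (cmod a ^ 2)"
    by (metis complex_norm_square mult.commute)
  from f show ?thesis
  proof
    assume f: "\<forall>z. f z = a * z + b"
    have d: "f z - f w = a * (z - w)" for z w
      using f by (simp add: algebra_simps)
    have "cross (f u) (f v) (f w) = cmod a ^ 2 * cross u v w" for u v w
    proof -
      have "cnj (f v - f u) * (f w - f u) = (cnj a * a) * (cnj (v - u) * (w - u))"
        unfolding d by (simp add: algebra_simps)
      then show ?thesis
        unfolding cross_def aa by simp
    qed
    then show ?thesis
      using a by (intro that[of "cmod a"]) (auto simp: d norm_mult abs_mult)
  next
    assume f: "\<forall>z. f z = a * cnj z + b"
    have d: "f z - f w = a * cnj (z - w)" for z w
      using f by (simp add: algebra_simps)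
    have "cross (f u) (f v) (f w) = - (cmod a ^ 2 * cross u v w)" for u v w
    proof -
      have "cnj (f v - f u) * (f w - f u) = of_real (cmod a ^ 2) * cnj (cnj (v - u) * (w - u))"
        unfolding d aa[symmetric] by (simp add: algebra_simps)
      then have "cross (f u) (f v) (f w) = Im (of_real (cmod a ^ 2) * cnj (cnj (v - u) * (w - u)))"
        unfolding cross_def by (rule arg_cong)
      also have "\<dots> = - (cmod a ^ 2 * cross u v w)"
        unfolding cross_def by (simp only: Im_mult_of_real Im_cnj)
      finally show ?thesis .
    qed
    then show ?thesis
      using a by (intro that[of "cmod a"]) (auto simp: d norm_mult abs_mult simp del: complex_cnj_diff)
  qed
qed

lemma cross_sq_edge_sum_permute:
  assumes "{X1, X2, X3} = {A, B, C}" "X1 \<noteq> X2" "X2 \<noteq> X3" "X1 \<noteq> X3"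
  shows "\<bar>cross X1 X2 X3\<bar> = \<bar>cross A B C\<bar> \<and> sq_edge_sum X1 X2 X3 = sq_edge_sum A B C"
proof -
  have n: "cmod (x - y) = cmod (y - x)" for x y :: complex
    by (rule norm_minus_commute)
  have c: "cross B A C = - cross A B C" "cross A C B = - cross A B C" "cross C B A = - cross A B C"
    "cross B C A = cross A B C" "cross C A B = cross A B C"
    unfolding cross_def by (simp_all add: algebra_simps)
  from assms have "X1 \<in> {A, B, C}" "X2 \<in> {A, B, C}" "X3 \<in> {A, B, C}"
    by blast+
  with assms show ?thesis
    by (auto simp: c sq_edge_sum_def n[of A B] n[of B C] n[of A C] algebra_simps)
qed

lemma char_region_iff:
  "(0 \<le> Re p \<and> Re p \<le> 1/2 \<and> cmod (p - 1) \<le> 1) \<longleftrightarrow> cmod p \<le> cmod (p - 1) \<and> cmod (p - 1) \<le> 1"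
proof -
  have "cmod p \<le> cmod (p - 1) \<longleftrightarrow> cmod p ^ 2 \<le> cmod (p - 1) ^ 2"
    by (simp add: power2_le_iff_abs_le)
  also have "\<dots> \<longleftrightarrow> Re p \<le> 1/2"
    unfolding cmod_power2 by (simp add: power2_eq_square algebra_simps)
  finally have "cmod p \<le> cmod (p - 1) \<longleftrightarrow> Re p \<le> 1/2" .
  moreover have "cmod (p - 1) \<le> 1 \<Longrightarrow> 0 \<le> Re p"
    using abs_Re_le_cmod[of "p - 1"] by (simp add: abs_le_iff)
  ultimately show ?thesis
    by blast
qed

lemma is_char_point_norms:
  assumes "is_char_point A B C p"
  shows "cmod p \<le> cmod (p - 1)" "cmod (p - 1) \<le> 1"
  using assms char_region_iff[of p] by (auto simp: is_char_point_def)

lemma is_char_point_degenerate: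
  assumes "is_char_point A B C p" "\<not> (A \<noteq> B \<and> B \<noteq> C \<and> A \<noteq> C)"
  shows "p = 0"
proof -
  obtain f where img: "f ` {A, B, C} = {0, 1, p}"
    using assms(1) unfolding is_char_point_def by blast
  have "p \<noteq> 1" using assms(1) unfolding is_char_point_def by auto
  moreover have "card {0, 1, p} \<le> 2"
    using assms(2) card_image_le[of "{A, B, C}" f] unfolding img[symmetric]
    by (auto simp: insert_commute card_insert_if)
  ultimately show ?thesis
    by (cases "p = 0") auto
qed

lemma is_char_point_invariants:
  assumes P: "is_char_point A B C p" and ABC: "A \<noteq> B" "B \<noteq> C" "A \<noteq> C"
  shows "Im p * max_sq_edge A B C = \<bar>cross A B C\<bar>"
    and "(cmod p ^ 2 + cmod (p - 1) ^ 2 + 1) * max_sq_edge A B C = sq_edge_sum A B C"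
proof -
  obtain f where sim: "similitude f" and img: "f ` {A, B, C} = {0, 1, p}"
    using P unfolding is_char_point_def by blast
  obtain r where r: "0 < r" and dist: "\<And>z w. cmod (f z - f w) = r * cmod (z - w)"
    and crs: "\<And>u v w. \<bar>cross (f u) (f v) (f w)\<bar> = r^2 * \<bar>cross u v w\<bar>"
    using similitude_scaling[OF sim] by blast
  have "inj f"
  proof (rule injI)
    fix z w
    assume "f z = f w"
    then have "r * cmod (z - w) = 0"
      using dist[of z w] by simp
    then show "z = w"
      using r by simp
  qed
  then have "card {0, 1, p} = 3"
    using ABC unfolding img[symmetric] by (simp add: inj_eq card_insert_if)
  then have p01: "p \<noteq> 0" "p \<noteq> 1"
    by (auto simp: card_insert_if)
  have "0 \<in> f ` {A, B, C}" "1 \<in> f ` {A, B, C}" "p \<in> f ` {A, B, C}"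
    unfolding img by simp_all
  then obtain X1 X2 X3 where X: "{X1, X2, X3} \<subseteq> {A, B, C}" "f X1 = 0" "f X2 = 1" "f X3 = p"
    by (elim imageE) (metis empty_subsetI insert_subset)
  then have X_distinct: "X1 \<noteq> X2" "X2 \<noteq> X3" "X1 \<noteq> X3"
    using p01 by auto
  then have X_eq: "{X1, X2, X3} = {A, B, C}"
    using X(1) ABC by auto
  have "r^2 * cmod (z - w)^2 \<le> 1" if "z \<in> {A, B, C}" "w \<in> {A, B, C}" for z w
  proof -
    have "f z \<in> {0, 1, p}" "f w \<in> {0, 1, p}"
      using img that by blast+
    then have "cmod (f z - f w) \<le> 1"
      using is_char_point_norms[OF P] by (auto simp: norm_minus_commute)
    then have "(r * cmod (z - w))^2 \<le> 1"
      using r by (intro power_le_one) (auto simp: dist)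
    then show ?thesis
      by (simp add: power_mult_distrib)
  qed
  then have "r^2 * max_sq_edge A B C \<le> 1"
    unfolding max_sq_edge_def by (auto simp: max_def)
  moreover have "r^2 * cmod (X2 - X1)^2 = 1"
    using dist[of X2 X1] X by (simp add: power_mult_distrib[symmetric])
  moreover have "cmod (X2 - X1)^2 \<le> max_sq_edge A B C"
    using X(1) unfolding max_sq_edge_def by (auto simp: norm_minus_commute max_def)
  \<comment> \<open>the image {0, 1, p} has diameter 1, attained by an edge: so f scales the longest edge to 1\<close>
  ultimately have scale: "r^2 * max_sq_edge A B C = 1"
    using mult_left_mono[of "cmod (X2 - X1)^2" "max_sq_edge A B C" "r^2"] by simp
  have "Im p = r^2 * \<bar>cross X1 X2 X3\<bar>"
    using crs[of X1 X2 X3] X P by (simp add: cross_def is_char_point_def)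
  moreover have "sq_edge_sum (f X1) (f X2) (f X3) = r^2 * sq_edge_sum X1 X2 X3"
    unfolding sq_edge_sum_def dist by (simp add: power_mult_distrib algebra_simps)
  moreover have "sq_edge_sum (f X1) (f X2) (f X3) = cmod p ^ 2 + cmod (p - 1) ^ 2 + 1"
    using X by (simp add: sq_edge_sum_def norm_minus_commute)
  ultimately have "Im p = r^2 * \<bar>cross A B C\<bar>"
    and "cmod p ^ 2 + cmod (p - 1) ^ 2 + 1 = r^2 * sq_edge_sum A B C"
    using cross_sq_edge_sum_permute[OF X_eq X_distinct] by simp_all
  then show "Im p * max_sq_edge A B C = \<bar>cross A B C\<bar>"
    and "(cmod p ^ 2 + cmod (p - 1) ^ 2 + 1) * max_sq_edge A B C = sq_edge_sum A B C"
    using scale by (simp_all add: algebra_simps)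
qed

text \<open>
  Both Im p and cmod p ^ 2 + cmod (p - 1) ^ 2 are read off from the triangle, and together with
  Re p \<le> 1/2 they determine p.
\<close>
lemma is_char_point_unique:
  assumes P: "is_char_point A B C p" and Q: "is_char_point A B C q" and nd: "nondeg (A, B, C)"
  shows "p = q"
proof (cases "A \<noteq> B \<and> B \<noteq> C \<and> A \<noteq> C")
  case False
  then show ?thesis
    using is_char_point_degenerate[OF P] is_char_point_degenerate[OF Q] by simp
next
  case True
  have L: "max_sq_edge A B C \<noteq> 0"
    using nd by (auto simp: max_sq_edge_def nondeg_def max_def)
  have im: "Im p = Im q"
    using is_char_point_invariants(1)[OF P] is_char_point_invariants(1)[OF Q] True L
    by (metis mult_right_cancel)
  have e: "cmod z ^ 2 + cmod (z - 1) ^ 2 + 1 = 2 * (Re z - 1/2)^2 + 2 * Im z ^ 2 + 3/2" for z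
    unfolding cmod_power2 by (simp add: power2_eq_square algebra_simps)
  have "(cmod p ^ 2 + cmod (p - 1) ^ 2 + 1) * max_sq_edge A B C
      = (cmod q ^ 2 + cmod (q - 1) ^ 2 + 1) * max_sq_edge A B C"
    using is_char_point_invariants(2)[OF P] is_char_point_invariants(2)[OF Q] True by simp
  then have "(Re p - 1/2)^2 = (Re q - 1/2)^2"
    using L im unfolding e by simp
  moreover have "Re p \<le> 1/2" "Re q \<le> 1/2"
    using P Q unfolding is_char_point_def by auto
  ultimately have "Re p = Re q"
    by (auto simp: power2_eq_iff)
  with im show ?thesis
    by (simp add: complex_eq_iff)
qed

lemma ex_is_char_point_sorted:
  assumes "U \<noteq> V" "cmod (W - U) \<le> cmod (W - V)" "cmod (W - V) \<le> cmod (V - U)"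
    and ABC: "{U, V, W} = {A, B, C}"
  shows "\<exists>p. is_char_point A B C p"
proof -
  define d where "d = V - U"
  define w where "w = (W - U) / d"
  have "d \<noteq> 0"
    using assms by (simp add: d_def)
  have "w - 1 = (W - V) / d"
    using \<open>d \<noteq> 0\<close> by (simp add: w_def d_def field_simps)
  then have "cmod w \<le> cmod (w - 1) \<and> cmod (w - 1) \<le> 1"
    using assms \<open>d \<noteq> 0\<close> by (simp add: w_def d_def norm_divide divide_right_mono divide_le_eq_1)
  then have region: "0 \<le> Re w \<and> Re w \<le> 1/2 \<and> cmod (w - 1) \<le> 1"
    using char_region_iff by blast
  have img: "f ` {A, B, C} = {f U, f V, f W}" for f :: "complex \<Rightarrow> complex"
    using ABC by auto
  show ?thesis
  proof (cases "0 \<le> Im w")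
    case True
    define f where "f z = (1 / d) * z + (- U / d)" for z
    have fz: "f z = (z - U) / d" for z
      by (simp add: f_def diff_divide_distrib)
    have "similitude f"
      unfolding similitude_def f_def using \<open>d \<noteq> 0\<close> by (intro exI[of _ "1 / d"] exI[of _ "- U / d"]) auto
    moreover have "f U = 0" "f V = 1" "f W = w"
      unfolding fz using \<open>d \<noteq> 0\<close> by (simp_all add: w_def d_def[symmetric])
    ultimately have "is_char_point A B C w"
      unfolding is_char_point_def img using region True by auto
    then show ?thesis ..
  next
    case False
    define f where "f z = (1 / cnj d) * cnj z + (- cnj U / cnj d)" for z
    have fz: "f z = cnj ((z - U) / d)" for z
      using \<open>d \<noteq> 0\<close> by (simp add: f_def field_simps)
    have "similitude f"
      unfolding similitude_def f_def using \<open>d \<noteq> 0\<close>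
      by (intro exI[of _ "1 / cnj d"] exI[of _ "- cnj U / cnj d"]) auto
    moreover have "f U = 0" "f V = 1" "f W = cnj w"
      unfolding fz using \<open>d \<noteq> 0\<close> by (simp_all add: w_def d_def[symmetric] del: complex_cnj_divide)
    moreover have "cmod (cnj w - 1) = cmod (w - 1)"
      by (metis complex_cnj_diff complex_cnj_one complex_mod_cnj)
    ultimately have "is_char_point A B C (cnj w)"
      unfolding is_char_point_def img using region False by auto
    then show ?thesis ..
  qed
qed

lemma ex_is_char_point:
  assumes "nondeg (A, B, C)"
  shows "\<exists>p. is_char_point A B C p"
proof -
  let ?ab = "cmod (B - A)" and ?bc = "cmod (C - B)" and ?ca = "cmod (A - C)"
  have n: "cmod (x - y) = cmod (y - x)" for x y :: complex
    by (rule norm_minus_commute)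
  have pos: "0 < max ?ab (max ?bc ?ca)"
    using assms by (auto simp: nondeg_def less_max_iff_disj)
  consider "?bc \<le> ?ab \<and> ?ca \<le> ?ab" | "?ab \<le> ?bc \<and> ?ca \<le> ?bc" | "?ab \<le> ?ca \<and> ?bc \<le> ?ca"
    by linarith
  then show ?thesis
  proof cases
    case 1
    with pos have "A \<noteq> B" by (auto simp: max_def split: if_splits)
    with 1 show ?thesis
      by (cases "?ca \<le> ?bc")
        (auto simp: n insert_commute intro: ex_is_char_point_sorted[of A B C] ex_is_char_point_sorted[of B A C])
  next
    case 2
    with pos have "B \<noteq> C" by (auto simp: max_def split: if_splits)
    with 2 show ?thesis
      by (cases "?ab \<le> ?ca")
        (auto simp: n insert_commute intro: ex_is_char_point_sorted[of B C A] ex_is_char_point_sorted[of C B A])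
  next
    case 3
    with pos have "C \<noteq> A" by (auto simp: max_def split: if_splits)
    with 3 show ?thesis
      by (cases "?bc \<le> ?ab")
        (auto simp: n insert_commute intro: ex_is_char_point_sorted[of C A B] ex_is_char_point_sorted[of A C B])
  qed
qed

lemma char_point_is_char_point:
  assumes "nondeg (A, B, C)"
  shows "is_char_point A B C (char_point (A, B, C))"
  unfolding char_point_eq
  using ex_is_char_point[OF assms] is_char_point_unique[OF _ _ assms] by (metis theI)

lemma char_point_Im_bound:
  assumes "nondeg (A, B, C)"
  shows "0 \<le> Im (char_point (A, B, C))"
    and "Im (char_point (A, B, C)) * max_sq_edge A B C \<le> \<bar>cross A B C\<bar>"
proof -
  have P: "is_char_point A B C (char_point (A, B, C))"
    by (rule char_point_is_char_point[OF assms])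
  then show "0 \<le> Im (char_point (A, B, C))"
    by (simp add: is_char_point_def)
  show "Im (char_point (A, B, C)) * max_sq_edge A B C \<le> \<bar>cross A B C\<bar>"
    using is_char_point_invariants(1)[OF P] is_char_point_degenerate[OF P] by fastforce
qed


section \<open>The contraction factor\<close>

definition qform :: "real \<Rightarrow> real \<Rightarrow> real" where
  "qform s t = s^2 - s*t + t^2"

definition child_coeffs :: "(real \<times> real \<times> real) list" where
  "child_coeffs = [(7,2,4), (13,-10,4), (13,-16,7), (7,-16,13), (4,-10,13), (4,2,7)]"

definition child_qform :: "nat \<Rightarrow> real \<Rightarrow> real \<Rightarrow> real" where
  "child_qform k s t = (case child_coeffs ! k of (a, b, c) \<Rightarrow> a * s^2 + b * s * t + c * t^2)"

definition contraction_sum :: "real \<Rightarrow> real \<Rightarrow> real" where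
  "contraction_sum s t = (\<Sum>k<6. sqrt (6 * qform s t / child_qform k s t))"

lemma sum_less_6: "(\<Sum>k<(6::nat). f k) = f 0 + f 1 + f 2 + f 3 + f 4 + (f 5 :: 'a::comm_monoid_add)"
  by (simp add: eval_nat_numeral)

lemma all_less_6: "(\<forall>k<6. P k) \<longleftrightarrow> P 0 \<and> P 1 \<and> P 2 \<and> P 3 \<and> P 4 \<and> P (5::nat)"
  by (simp add: eval_nat_numeral less_Suc_eq, blast)

lemma child_qform_simps:
  "child_qform 0 s t = 7 * s^2 + 2 * s * t + 4 * t^2"
  "child_qform (Suc 0) s t = 13 * s^2 - 10 * s * t + 4 * t^2"
  "child_qform 2 s t = 13 * s^2 - 16 * s * t + 7 * t^2"
  "child_qform 3 s t = 7 * s^2 - 16 * s * t + 13 * t^2"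
  "child_qform 4 s t = 4 * s^2 - 10 * s * t + 13 * t^2"
  "child_qform 5 s t = 4 * s^2 + 2 * s * t + 7 * t^2"
  by (simp_all add: child_qform_def child_coeffs_def)

lemma qform_pos:
  assumes "s \<noteq> 0 \<or> t \<noteq> 0"
  shows "0 < qform s t"
proof -
  have "qform s t = (s - t/2)^2 + 3/4 * t^2"
    by (simp add: qform_def power2_eq_square algebra_simps)
  with assms show ?thesis
    by (cases "t = 0") (auto simp: qform_def intro: add_nonneg_pos)
qed

lemma qform_nonneg: "0 \<le> qform s t"
  using qform_pos[of s t] by (cases "s = 0 \<and> t = 0") (auto simp: qform_def)

lemma qform_eq_0_iff: "qform s t = 0 \<longleftrightarrow> s = 0 \<and> t = 0"
  using qform_pos[of s t] by (cases "s = 0 \<and> t = 0") (auto simp: qform_def)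

definition quadratic :: "(real \<Rightarrow> real) \<Rightarrow> bool" where
  "quadratic p \<longleftrightarrow> (\<exists>a b c. \<forall>x. p x = a * x^2 + b * x + c)"

lemma quadratic_const: "quadratic (\<lambda>x. c)"
  unfolding quadratic_def by (rule exI[of _ 0], rule exI[of _ 0]) simp

lemma quadratic_qform: "quadratic (\<lambda>x. qform 1 x)"
  unfolding quadratic_def qform_def by (rule exI[of _ 1], rule exI[of _ "-1"]) auto

lemma quadratic_child_qform: "quadratic (\<lambda>x. child_qform k 1 x)"
proof -
  obtain a b c where "child_coeffs ! k = (a, b, c)"
    by (metis prod_cases3)
  then show ?thesis
    unfolding quadratic_def child_qform_def by (intro exI[of _ c] exI[of _ b] exI[of _ a]) auto
qed

lemma quadratic_add:
  assumes "quadratic p" "quadratic q" shows "quadratic (\<lambda>x. p x + q x)"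
proof -
  obtain a b c a' b' c' where "\<And>x. p x = a * x^2 + b * x + c" "\<And>x. q x = a' * x^2 + b' * x + c'"
    using assms unfolding quadratic_def by metis
  then show ?thesis
    unfolding quadratic_def by (intro exI[of _ "a + a'"] exI[of _ "b + b'"] exI[of _ "c + c'"])
      (simp add: algebra_simps)
qed

lemma quadratic_cmult:
  assumes "quadratic p" shows "quadratic (\<lambda>x. r * p x)"
proof -
  obtain a b c where "\<And>x. p x = a * x^2 + b * x + c"
    using assms unfolding quadratic_def by metis
  then show ?thesis
    unfolding quadratic_def by (intro exI[of _ "r * a"] exI[of _ "r * b"] exI[of _ "r * c"])
      (simp add: algebra_simps)
qed

lemma quadratic_diff: "quadratic p \<Longrightarrow> quadratic q \<Longrightarrow> quadratic (\<lambda>x. p x - q x)"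
  using quadratic_add[of p "\<lambda>x. -1 * q x"] quadratic_cmult[of q "-1"] by simp

lemma quadratic_divide: "quadratic p \<Longrightarrow> quadratic (\<lambda>x. p x / c)"
  using quadratic_cmult[of p "1/c"] by simp

lemma quadratic_sum: "(\<And>k. k \<in> A \<Longrightarrow> quadratic (p k)) \<Longrightarrow> quadratic (\<lambda>x. \<Sum>k\<in>A. p k x)"
  by (induction A rule: infinite_finite_induct) (auto intro: quadratic_const quadratic_add)

text \<open>For quadratic p these are the signs of the three Bernstein coefficients of p on [u, v].\<close>
definition bernstein_nonneg :: "real \<Rightarrow> real \<Rightarrow> (real \<Rightarrow> real) \<Rightarrow> bool" where
  "bernstein_nonneg u v p \<longleftrightarrow> 0 \<le> p u \<and> 0 \<le> p v \<and> p u + p v \<le> 4 * p ((u + v) / 2)"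

lemmas quadratic_intros = quadratic_const quadratic_qform quadratic_child_qform
  quadratic_add quadratic_diff quadratic_cmult quadratic_divide quadratic_sum

lemma quadratic_nonneg_on_interval:
  assumes "quadratic p" "bernstein_nonneg u v p" "u \<le> x" "x \<le> v"
  shows "0 \<le> p x"
proof (cases "u = v")
  case True
  with assms show ?thesis by (simp add: bernstein_nonneg_def)
next
  case False
  obtain a b c where p: "\<And>x. p x = a * x^2 + b * x + c"
    using assms(1) unfolding quadratic_def by blast
  have "(v - u)^2 * p x
      = p u * (v - x)^2 + (4 * p ((u + v) / 2) - p u - p v) * ((x - u) * (v - x)) + p v * (x - u)^2"
    unfolding p by (simp add: power2_eq_square field_simps)
  also have "0 \<le> \<dots>"
    using assms unfolding bernstein_nonneg_def by (intro add_nonneg_nonneg mult_nonneg_nonneg) auto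
  finally show ?thesis
    using False by (simp add: zero_le_mult_iff)
qed

lemma inverse_sqrt_le_chord:
  fixes a b y :: real
  assumes "0 < a" "a < b" "a^2 \<le> y" "y \<le> b^2"
  shows "1 / sqrt y \<le> 1 / a - (y - a^2) / (a * b * (a + b))"
proof -
  define w where "w = sqrt y"
  have "a \<le> w" "w \<le> b"
    unfolding w_def using assms real_le_rsqrt real_sqrt_le_mono[of y "b^2"] by auto
  have y: "y = w^2"
    unfolding w_def using assms by (simp add: order_trans[OF zero_le_power2])
  have "1 / a - (y - a^2) / (a * b * (a + b)) - 1 / w
      = (w - a) * (b - w) * (w + a + b) / (w * a * b * (a + b))"
  proof -
    have "w \<noteq> 0" "b \<noteq> 0" "a + b \<noteq> 0" using assms \<open>a \<le> w\<close> by auto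
    then show ?thesis
      unfolding y using assms by (simp add: divide_simps) (simp add: algebra_simps power2_eq_square)
  qed
  also have "0 \<le> \<dots>"
    using assms \<open>a \<le> w\<close> \<open>w \<le> b\<close> by (intro divide_nonneg_nonneg mult_nonneg_nonneg) auto
  finally show ?thesis
    unfolding w_def by simp
qed

definition chord_bound :: "real \<Rightarrow> real \<Rightarrow> real \<Rightarrow> real \<Rightarrow> real" where
  "chord_bound a b Q q = Q / a - (q / 6 - a^2 * Q) / (a * b * (a + b))"

lemma scaled_inverse_sqrt_le_chord_bound:
  fixes a b q Q :: real
  assumes "0 < a" "a < b" "0 < Q" "6 * a^2 * Q \<le> q" "q \<le> 6 * b^2 * Q"
  shows "Q * sqrt (6 * Q / q) \<le> chord_bound a b Q q"
proof -
  define D where "D = a * b * (a + b)"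
  have "sqrt (6 * Q / q) = 1 / sqrt (q / (6 * Q))"
    by (simp add: real_sqrt_divide)
  also have "\<dots> \<le> 1 / a - (q / (6 * Q) - a^2) / D"
    unfolding D_def using assms by (intro inverse_sqrt_le_chord) (auto simp: field_simps)
  finally have "Q * sqrt (6 * Q / q) \<le> Q * (1 / a - (q / (6 * Q) - a^2) / D)"
    using assms by (simp add: mult_left_mono)
  also have "\<dots> = Q / a - (q / 6 - a^2 * Q) / D"
    using assms by (simp add: algebra_simps diff_divide_distrib)
  finally show ?thesis
    unfolding D_def chord_bound_def .
qed

lemma quadratic_chord_bound:
  "quadratic P \<Longrightarrow> quadratic R \<Longrightarrow> quadratic (\<lambda>x. chord_bound a b (P x) (R x))"
  unfolding chord_bound_def by (intro quadratic_diff quadratic_divide quadratic_cmult)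

text \<open>
  On [u, v] the numbers as ! k < bs ! k enclose sqrt (q_k / 6Q), where q_k = child_qform k 1 x and
  Q = qform 1 x. By convexity of y \<mapsto> 1 / sqrt y, the term sqrt (6Q / q_k) then lies below a chord,
  and everything left to check is a quadratic inequality in x.
\<close>
definition chord_certificate :: "real \<Rightarrow> real \<Rightarrow> real list \<Rightarrow> real list \<Rightarrow> real \<Rightarrow> bool" where
  "chord_certificate u v as bs c \<longleftrightarrow>
     (\<forall>k<6. 0 < as ! k \<and> as ! k < bs ! k \<and>
        bernstein_nonneg u v (\<lambda>x. child_qform k 1 x - 6 * (as ! k)^2 * qform 1 x) \<and>
        bernstein_nonneg u v (\<lambda>x. 6 * (bs ! k)^2 * qform 1 x - child_qform k 1 x)) \<and>
     bernstein_nonneg u v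
       (\<lambda>x. c * qform 1 x - (\<Sum>k<6. chord_bound (as ! k) (bs ! k) (qform 1 x) (child_qform k 1 x)))"

lemma contraction_sum_le_certified:
  assumes cert: "chord_certificate u v as bs c" and x: "u \<le> x" "x \<le> v"
  shows "contraction_sum 1 x \<le> c"
proof -
  let ?Q = "qform 1 x"
  let ?chord = "\<lambda>k. chord_bound (as ! k) (bs ! k) ?Q (child_qform k 1 x)"
  have Q: "0 < ?Q"
    by (rule qform_pos) simp
  have chord: "?Q * sqrt (6 * ?Q / child_qform k 1 x) \<le> ?chord k" if "k < 6" for k
  proof -
    let ?a = "as ! k" and ?b = "bs ! k"
    have ab: "0 < ?a" "?a < ?b"
      using cert that by (auto simp: chord_certificate_def)
    have lo: "bernstein_nonneg u v (\<lambda>x. child_qform k 1 x - 6 * ?a^2 * qform 1 x)"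
      and hi: "bernstein_nonneg u v (\<lambda>x. 6 * ?b^2 * qform 1 x - child_qform k 1 x)"
      using cert that by (simp_all add: chord_certificate_def)
    have "0 \<le> child_qform k 1 x - 6 * ?a^2 * ?Q"
      by (rule quadratic_nonneg_on_interval[OF _ lo x]) (intro quadratic_intros)
    moreover have "0 \<le> 6 * ?b^2 * ?Q - child_qform k 1 x"
      by (rule quadratic_nonneg_on_interval[OF _ hi x]) (intro quadratic_intros)
    ultimately show ?thesis
      using Q ab by (intro scaled_inverse_sqrt_le_chord_bound) auto
  qed
  have total: "bernstein_nonneg u v
      (\<lambda>x. c * qform 1 x - (\<Sum>k<6. chord_bound (as ! k) (bs ! k) (qform 1 x) (child_qform k 1 x)))"
    using cert by (simp add: chord_certificate_def)
  have "?Q * contraction_sum 1 x = (\<Sum>k<6. ?Q * sqrt (6 * ?Q / child_qform k 1 x))"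
    by (simp add: contraction_sum_def sum_distrib_left)
  also have "\<dots> \<le> (\<Sum>k<6. ?chord k)"
    by (rule sum_mono) (use chord in simp)
  also have "\<dots> \<le> c * ?Q"
    using quadratic_nonneg_on_interval[OF _ total x] by (simp add: quadratic_intros quadratic_chord_bound)
  finally show ?thesis
    using Q by (simp add: mult.commute)
qed

lemmas chord_certificate_eval = chord_certificate_def bernstein_nonneg_def chord_bound_def
  all_less_6 sum_less_6 qform_def child_qform_simps power2_eq_square

lemma contraction_sum_le_certified_interval:
  "chord_certificate u v as bs c \<Longrightarrow> \<forall>x\<in>{u..v}. contraction_sum 1 x \<le> c"
  using contraction_sum_le_certified by auto

lemma contraction_sum_le_on_unit_interval:
  assumes "-1 \<le> x" "x \<le> 1"
  shows "contraction_sum 1 x \<le> 6 * (99/100)"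
proof -
  have "\<forall>x\<in>{(-1)..(-1/2)}. contraction_sum 1 x \<le> 6 * (99/100)"
    by (rule contraction_sum_le_certified_interval[of _ _
      "[7/10, 121/100, 7/5, 131/100, 107/100, 33/50]"
      "[83/100, 34/25, 37/25, 143/100, 31/25, 18/25]"]) (simp add: chord_certificate_eval)
  moreover have "\<forall>x\<in>{(-1/2)..(-1/4)}. contraction_sum 1 x \<le> 6 * (99/100)"
    by (rule contraction_sum_le_certified_interval[of _ _
      "[81/100, 133/100, 73/50, 121/100, 19/20, 33/50]"
      "[47/50, 143/100, 3/2, 133/100, 109/100, 18/25]"]) (simp add: chord_certificate_eval)
  moreover have "\<forall>x\<in>{(-1/4)..0}. contraction_sum 1 x \<le> 6 * (99/100)"
    by (rule contraction_sum_le_certified_interval[of _ _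
      "[23/25, 7/5, 73/50, 107/100, 81/100, 7/10]"
      "[109/100, 37/25, 3/2, 31/25, 97/100, 83/100]"]) (simp add: chord_certificate_eval)
  moreover have "\<forall>x\<in>{0..1/4}. contraction_sum 1 x \<le> 6 * (99/100)"
    by (rule contraction_sum_le_certified_interval[of _ _
      "[107/100, 73/50, 69/50, 87/100, 17/25, 81/100]"
      "[127/100, 3/2, 37/25, 109/100, 83/100, 51/50]"]) (simp add: chord_certificate_eval)
  moreover have "\<forall>x\<in>{1/4..3/8}. contraction_sum 1 x \<le> 6 * (99/100)"
    by (rule contraction_sum_le_certified_interval[of _ _
      "[5/4, 29/20, 131/100, 39/50, 33/50, 99/100]"
      "[34/25, 3/2, 7/5, 89/100, 7/10, 113/100]"]) (simp add: chord_certificate_eval)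
  moreover have "\<forall>x\<in>{3/8..1/2}. contraction_sum 1 x \<le> 6 * (99/100)"
    by (rule contraction_sum_le_certified_interval[of _ _
      "[133/100, 7/5, 121/100, 7/10, 33/50, 111/100]"
      "[143/100, 147/100, 133/100, 79/100, 18/25, 31/25]"]) (simp add: chord_certificate_eval)
  moreover have "\<forall>x\<in>{1/2..5/8}. contraction_sum 1 x \<le> 6 * (99/100)"
    by (rule contraction_sum_le_certified_interval[of _ _
      "[7/5, 133/100, 111/100, 33/50, 7/10, 121/100]"
      "[147/100, 143/100, 31/25, 18/25, 79/100, 133/100]"]) (simp add: chord_certificate_eval)
  moreover have "\<forall>x\<in>{5/8..3/4}. contraction_sum 1 x \<le> 6 * (99/100)"
    by (rule contraction_sum_le_certified_interval[of _ _
      "[29/20, 5/4, 99/100, 33/50, 39/50, 131/100]"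
      "[3/2, 34/25, 113/100, 7/10, 89/100, 7/5]"]) (simp add: chord_certificate_eval)
  moreover have "\<forall>x\<in>{3/4..1}. contraction_sum 1 x \<le> 6 * (99/100)"
    by (rule contraction_sum_le_certified_interval[of _ _
      "[73/50, 107/100, 81/100, 17/25, 87/100, 69/50]"
      "[3/2, 127/100, 51/50, 83/100, 109/100, 37/25]"]) (simp add: chord_certificate_eval)
  moreover have "x \<in> {(-1)..(-1/2)} \<union> {(-1/2)..(-1/4)} \<union> {(-1/4)..0} \<union> {0..1/4} \<union> {1/4..3/8} \<union>
      {3/8..1/2} \<union> {1/2..5/8} \<union> {5/8..3/4} \<union> {3/4..1}"
    using assms by auto
  ultimately show ?thesis
    by blast
qed

lemma contraction_sum_homogeneous:
  assumes "s \<noteq> 0"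
  shows "contraction_sum s t = contraction_sum 1 (t / s)"
proof -
  have "qform s t = s^2 * qform 1 (t / s)" "child_qform k s t = s^2 * child_qform k 1 (t / s)" for k
    using assms by (simp_all add: qform_def child_qform_def power2_eq_square field_simps split: prod.split)
  then have "6 * qform s t / child_qform k s t = 6 * qform 1 (t / s) / child_qform k 1 (t / s)" for k
    using assms by simp
  then show ?thesis
    by (simp add: contraction_sum_def)
qed

lemma contraction_sum_swap: "contraction_sum s t = contraction_sum t s"
proof -
  have "qform t s = qform s t"
    by (simp add: qform_def algebra_simps)
  moreover have "child_qform 0 t s = child_qform 5 s t" "child_qform (Suc 0) t s = child_qform 4 s t"
    "child_qform 2 t s = child_qform 3 s t" "child_qform 3 t s = child_qform 2 s t"
    "child_qform 4 t s = child_qform (Suc 0) s t" "child_qform 5 t s = child_qform 0 s t"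
    by (simp_all add: child_qform_simps algebra_simps)
  ultimately show ?thesis
    unfolding contraction_sum_def sum_less_6 by simp
qed

lemma contraction_sum_le:
  assumes "s \<noteq> 0 \<or> t \<noteq> 0"
  shows "contraction_sum s t \<le> 6 * (99/100)"
proof (cases "\<bar>t\<bar> \<le> \<bar>s\<bar>")
  case True
  with assms have "s \<noteq> 0"
    by auto
  with True have "\<bar>t / s\<bar> \<le> 1"
    by (simp add: abs_divide divide_le_eq)
  then have "-1 \<le> t / s" "t / s \<le> 1"
    by linarith+
  then show ?thesis
    using contraction_sum_le_on_unit_interval contraction_sum_homogeneous[OF \<open>s \<noteq> 0\<close>] by simp
next
  case False
  then have "t \<noteq> 0"
    by auto
  with False have "\<bar>s / t\<bar> \<le> 1"
    by (simp add: abs_divide divide_le_eq)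
  then have "-1 \<le> s / t" "s / t \<le> 1"
    by linarith+
  then show ?thesis
    using contraction_sum_le_on_unit_interval contraction_sum_homogeneous[OF \<open>t \<noteq> 0\<close>]
      contraction_sum_swap[of s t] by simp
qed


section \<open>The Lyapunov function\<close>

definition tri_cross :: "tri \<Rightarrow> real" where
  "tri_cross T = (case T of (A, B, C) \<Rightarrow> cross A B C)"

definition tri_qform :: "tri \<Rightarrow> real" where
  "tri_qform T = (case T of (A, B, C) \<Rightarrow> qform (Re (B - A)) (Re (C - A)))"

definition lyapunov :: "tri \<Rightarrow> real" where
  "lyapunov T = sqrt (\<bar>tri_cross T\<bar> / tri_qform T)"

lemma lyapunov_nonneg: "0 \<le> lyapunov T"
  by (cases T) (simp add: lyapunov_def tri_qform_def qform_nonneg)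

lemma subdiv_tri_cross:
  assumes "k < 6"
  shows "tri_cross (subdiv T k) = tri_cross T / 6"
proof -
  obtain A B C where "T = (A, B, C)"
    by (cases T)
  have "\<forall>k<6. tri_cross (subdiv (A, B, C) k) = tri_cross (A, B, C) / 6"
    unfolding all_less_6
    by (simp add: subdiv_def Let_def tri_cross_def cross_def field_simps; simp add: algebra_simps)
  with assms \<open>T = (A, B, C)\<close> show ?thesis
    by blast
qed

lemma subdiv_tri_qform:
  assumes "k < 6"
  shows "tri_qform (subdiv (A, B, C) k) = child_qform k (Re (B - A)) (Re (C - A)) / 36"
proof -
  have "\<forall>k<6. tri_qform (subdiv (A, B, C) k) = child_qform k (Re (B - A)) (Re (C - A)) / 36"
    unfolding all_less_6
    by (simp add: subdiv_def Let_def tri_qform_def qform_def child_qform_simps power2_eq_square field_simps;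
        simp add: algebra_simps)
  with assms show ?thesis
    by blast
qed

lemma lyapunov_subdiv:
  assumes "k < 6" and Q: "tri_qform (A, B, C) \<noteq> 0"
  shows "lyapunov (subdiv (A, B, C) k)
    = lyapunov (A, B, C) * sqrt (6 * tri_qform (A, B, C) / child_qform k (Re (B - A)) (Re (C - A)))"
proof -
  let ?d = "\<bar>tri_cross (A, B, C)\<bar>" and ?Q = "tri_qform (A, B, C)"
    and ?q = "child_qform k (Re (B - A)) (Re (C - A))"
  have "lyapunov (subdiv (A, B, C) k) = sqrt ((?d / 6) / (?q / 36))"
    using assms by (simp add: lyapunov_def subdiv_tri_cross subdiv_tri_qform abs_divide)
  also have "(?d / 6) / (?q / 36) = (?d / ?Q) * (6 * ?Q / ?q)"
    using Q by (simp add: field_simps)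
  also have "sqrt \<dots> = lyapunov (A, B, C) * sqrt (6 * ?Q / ?q)"
    unfolding lyapunov_def by (rule real_sqrt_mult)
  finally show ?thesis .
qed

lemma sum_lyapunov_subdiv_le: "(\<Sum>k<6. lyapunov (subdiv T k)) \<le> 6 * (99/100) * lyapunov T"
proof -
  obtain A B C where T: "T = (A, B, C)"
    by (cases T)
  define s where "s = Re (B - A)"
  define t where "t = Re (C - A)"
  have Q: "tri_qform (A, B, C) = qform s t"
    by (simp add: tri_qform_def s_def t_def)
  show ?thesis
  proof (cases "s = 0 \<and> t = 0")
    case True
    then have "lyapunov (subdiv T k) = 0" if "k < 6" for k
      using that by (simp add: T lyapunov_def subdiv_tri_qform s_def t_def child_qform_def split: prod.split)
    then show ?thesis
      using lyapunov_nonneg[of T] by simp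
  next
    case False
    then have "tri_qform (A, B, C) \<noteq> 0"
      by (simp add: Q qform_eq_0_iff)
    then have "(\<Sum>k<6. lyapunov (subdiv T k)) = lyapunov T * contraction_sum s t"
      by (simp add: T lyapunov_subdiv Q contraction_sum_def sum_distrib_left s_def t_def)
    also have "\<dots> \<le> lyapunov T * (6 * (99/100))"
      using False by (intro mult_left_mono contraction_sum_le lyapunov_nonneg) auto
    finally show ?thesis
      by simp
  qed
qed

lemma qform_Re_le_max_sq_edge: "2 * qform (Re (B - A)) (Re (C - A)) \<le> 3 * max_sq_edge A B C"
proof -
  define s where "s = Re (B - A)"
  define t where "t = Re (C - A)"
  have Re_sq: "Re z ^ 2 \<le> cmod z ^ 2" for z
    using power_mono[OF abs_Re_le_cmod[of z], of 2] by simp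
  have "s^2 \<le> cmod (B - A)^2" "t^2 \<le> cmod (A - C)^2" "(s - t)^2 \<le> cmod (C - B)^2"
    using Re_sq[of "B - A"] Re_sq[of "C - A"] Re_sq[of "C - B"]
    by (simp_all add: s_def t_def norm_minus_commute[of A C] power2_commute[of "Re B"])
  moreover have "2 * qform s t = s^2 + t^2 + (s - t)^2"
    by (simp add: qform_def power2_eq_square algebra_simps)
  ultimately show ?thesis
    unfolding max_sq_edge_def s_def[symmetric] t_def[symmetric] by linarith
qed

lemma char_point_Im_le_lyapunov:
  assumes "nondeg T"
  shows "Im (char_point T) \<le> 3/2 * lyapunov T ^ 2"
proof -
  obtain A B C where T: "T = (A, B, C)"
    by (cases T)
  let ?Q = "tri_qform T" and ?Y = "Im (char_point T)"
  have Y: "0 \<le> ?Y" "?Y * max_sq_edge A B C \<le> \<bar>cross A B C\<bar>"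
    using char_point_Im_bound assms by (simp_all add: T)
  have lyapunov_sq: "lyapunov T ^ 2 = \<bar>cross A B C\<bar> / ?Q"
    by (simp add: lyapunov_def T tri_cross_def tri_qform_def qform_nonneg)
  show ?thesis
  proof (cases "?Q = 0")
    case True
    then have "cross A B C = 0"
      by (simp add: T tri_qform_def qform_eq_0_iff cross_def)
    moreover have "0 < max_sq_edge A B C"
      using assms by (auto simp: T max_sq_edge_def nondeg_def less_max_iff_disj)
    ultimately show ?thesis
      using Y by (simp add: mult_le_0_iff)
  next
    case False
    then have Q: "0 < ?Q"
      using qform_nonneg by (simp add: T tri_qform_def order_less_le)
    have "?Y * (2 * ?Q) \<le> ?Y * (3 * max_sq_edge A B C)"
      using Y qform_Re_le_max_sq_edge[of B A C] by (intro mult_left_mono) (auto simp: T tri_qform_def)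
    also have "\<dots> \<le> 3 * \<bar>cross A B C\<bar>"
      using Y by simp
    finally show ?thesis
      unfolding lyapunov_sq using Q by (simp add: field_simps)
  qed
qed

lemma nondeg_subdiv:
  assumes "nondeg T" "k < 6"
  shows "nondeg (subdiv T k)"
proof -
  obtain A b c where T: "T = (A, A + b, A + c)"
    by (metis add_diff_cancel_left' diff_add_cancel prod_cases3)
  have nondeg_iff: "nondeg (X, Y, Z) \<longleftrightarrow> Y - X \<noteq> 0 \<or> Z - X \<noteq> 0" for X Y Z
    by (auto simp: nondeg_def)
  have "\<forall>k<6. nondeg (subdiv (A, A + b, A + c) k)"
    using assms(1) unfolding T all_less_6 by (auto simp: subdiv_def Let_def nondeg_iff field_simps)
  with assms(2) T show ?thesis
    by blast
qed


section \<open>The random chain\<close>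

lemma prob_space_choice_space: "prob_space choice_space"
  unfolding choice_space_def
  by (rule prob_space.prob_space_stream_space[OF measure_pmf.prob_space_axioms])

lemma tri_chain_Suc_Cons: "tri_chain T (x ## \<omega>) (Suc n) = tri_chain (subdiv T x) \<omega> n"
  by (induction n arbitrary: T) simp_all

lemma measurable_tri_chain:
  fixes F :: "tri \<Rightarrow> 'b::topological_space"
  shows "(\<lambda>\<omega>. F (tri_chain T \<omega> n)) \<in> borel_measurable choice_space"
  unfolding choice_space_def
proof (induction n arbitrary: T)
  case 0
  then show ?case by simp
next
  case (Suc n)
  let ?S = "stream_space (measure_pmf (pmf_of_set {0..<6::nat}))"
  have shd: "shd \<in> ?S \<rightarrow>\<^sub>M count_space UNIV"
    using measurable_shd by (simp add: measurable_cong_sets[OF refl sets_measure_pmf_count_space])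
  have "(\<lambda>\<omega>. F (tri_chain (subdiv T (shd \<omega>)) (stl \<omega>) n)) \<in> borel_measurable ?S"
    by (rule measurable_compose_countable[OF _ shd], rule measurable_compose[OF measurable_stl Suc.IH])
  then show ?case
    using tri_chain_Suc_Cons[of T "shd \<omega>" "stl \<omega>" n for \<omega>] by simp
qed

lemma AE_choices_less_6: "AE \<omega> in choice_space. \<forall>i. \<omega> !! i < 6"
proof -
  have "AE \<omega> in choice_space. stream_all (\<lambda>x. x < 6) \<omega>"
    unfolding choice_space_def
    by (rule prob_space.AE_stream_all[OF measure_pmf.prob_space_axioms])
      (simp_all add: AE_measure_pmf_iff)
  then show ?thesis
    by eventually_elim (auto simp: sset_range)
qed

lemma nondeg_tri_chain:
  assumes "nondeg T" "\<forall>i. \<omega> !! i < 6"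
  shows "nondeg (tri_chain T \<omega> n)"
  by (induction n) (use assms nondeg_subdiv in auto)

lemma nn_integral_tri_chain_le:
  fixes V :: "tri \<Rightarrow> real"
  assumes V_nonneg: "\<And>T. 0 \<le> V T" and V_sum: "\<And>T. (\<Sum>k<6. V (subdiv T k)) \<le> 6 * \<rho> * V T"
    and "0 \<le> \<rho>"
  shows "(\<integral>\<^sup>+\<omega>. V (tri_chain T \<omega> n) \<partial>choice_space) \<le> ennreal (\<rho> ^ n * V T)"
proof (induction n arbitrary: T)
  case 0
  show ?case
    using prob_space.emeasure_space_1[OF prob_space_choice_space] by simp
next
  case (Suc n)
  let ?M = "measure_pmf (pmf_of_set {0..<6::nat})"
  have "(\<integral>\<^sup>+\<omega>. V (tri_chain T \<omega> (Suc n)) \<partial>choice_space)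
      = (\<integral>\<^sup>+x. (\<integral>\<^sup>+\<omega>. V (tri_chain T (x ## \<omega>) (Suc n)) \<partial>choice_space) \<partial>?M)"
    unfolding choice_space_def
    by (rule prob_space.nn_integral_stream_space[OF measure_pmf.prob_space_axioms
        measurable_tri_chain[unfolded choice_space_def]])
  also have "\<dots> \<le> (\<integral>\<^sup>+x. ennreal (\<rho> ^ n * V (subdiv T x)) \<partial>?M)"
    unfolding tri_chain_Suc_Cons by (intro nn_integral_mono Suc.IH)
  also have "\<dots> = (\<Sum>x\<in>{0..<6}. ennreal (\<rho> ^ n * V (subdiv T x))) / ennreal 6"
    by (subst nn_integral_pmf_of_set) auto
  also have "\<dots> = ennreal (\<rho> ^ n * (\<Sum>x<6. V (subdiv T x)) / 6)"
  proof -
    have "ennreal x / 6 = ennreal (x / 6)" if "0 \<le> x" for x :: real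
      using divide_ennreal[OF that, of 6] by simp
    then show ?thesis
      using V_nonneg \<open>0 \<le> \<rho>\<close>
      by (simp add: sum_ennreal sum_distrib_left sum_nonneg atLeast0LessThan)
  qed
  also have "\<dots> \<le> ennreal (\<rho> ^ Suc n * V T)"
  proof (rule ennreal_leI)
    have "\<rho> ^ n * (\<Sum>x<6. V (subdiv T x)) \<le> \<rho> ^ n * (6 * \<rho> * V T)"
      using V_sum \<open>0 \<le> \<rho>\<close> by (simp add: mult_left_mono)
    then show "\<rho> ^ n * (\<Sum>x<6. V (subdiv T x)) / 6 \<le> \<rho> ^ Suc n * V T"
      by (simp add: algebra_simps)
  qed
  finally show ?case .
qed

lemma AE_eventually_tri_chain_less_power:
  fixes V :: "tri \<Rightarrow> real"
  assumes V_nonneg: "\<And>T. 0 \<le> V T" and V_sum: "\<And>T. (\<Sum>k<6. V (subdiv T k)) \<le> 6 * \<rho> * V T"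
    and "0 \<le> \<rho>" "\<rho> < \<theta>"
  shows "AE \<omega> in choice_space. eventually (\<lambda>n. V (tri_chain T \<omega> n) < \<theta> ^ n) sequentially"
proof -
  interpret prob_space choice_space
    by (rule prob_space_choice_space)
  define A where "A n = {\<omega> \<in> space choice_space. \<theta> ^ n \<le> V (tri_chain T \<omega> n)}" for n
  have \<theta>: "0 < \<theta>"
    using assms by simp
  have A_sets: "A n \<in> sets choice_space" for n
    unfolding A_def using measurable_tri_chain[of V] by (auto simp: borel_measurable_iff_ge)
  have bound: "measure choice_space (A n) \<le> (\<rho> / \<theta>) ^ n * V T" for n
  proof -
    have "emeasure choice_space (A n) \<le> (\<integral>\<^sup>+\<omega>. ennreal (V (tri_chain T \<omega> n) / \<theta> ^ n) \<partial>choice_space)"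
      unfolding nn_integral_indicator[OF A_sets, symmetric]
      using \<theta> by (intro nn_integral_mono) (auto simp: A_def indicator_def)
    also have "\<dots> = ennreal (1 / \<theta> ^ n) * (\<integral>\<^sup>+\<omega>. ennreal (V (tri_chain T \<omega> n)) \<partial>choice_space)"
      using \<theta> V_nonneg
      by (subst nn_integral_cmult[symmetric]) (auto simp: measurable_tri_chain ennreal_mult[symmetric])
    also have "\<dots> \<le> ennreal (1 / \<theta> ^ n) * ennreal (\<rho> ^ n * V T)"
      by (intro mult_left_mono nn_integral_tri_chain_le[OF V_nonneg V_sum \<open>0 \<le> \<rho>\<close>]) simp
    also have "\<dots> = ennreal ((\<rho> / \<theta>) ^ n * V T)"
      using \<theta> \<open>0 \<le> \<rho>\<close> V_nonneg by (simp add: ennreal_mult[symmetric] power_divide)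
    finally show ?thesis
      using \<theta> \<open>0 \<le> \<rho>\<close> V_nonneg by (simp add: emeasure_eq_measure ennreal_le_iff)
  qed
  have "summable (\<lambda>n. (\<rho> / \<theta>) ^ n * V T)"
    using assms by (intro summable_mult2 summable_geometric) simp
  then have "summable (\<lambda>n. measure choice_space (A n))"
    by (rule summable_comparison_test') (use bound in simp)
  then have "AE \<omega> in choice_space. eventually (\<lambda>n. \<omega> \<in> space choice_space - A n) sequentially"
    using A_sets by (intro borel_cantelli_AE1) (auto simp: emeasure_eq_measure)
  then show ?thesis
    by eventually_elim (auto simp: A_def elim: eventually_mono)
qed

lemma limsup_lnE_le:
  fixes Y :: "nat \<Rightarrow> real"
  assumes "0 < \<theta>" and "eventually (\<lambda>n. Y n \<le> \<theta> ^ n) sequentially"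
  shows "limsup (\<lambda>n. ereal (1 / real n) * lnE (Y n)) \<le> ereal (ln \<theta>)"
proof (rule Limsup_bounded)
  show "eventually (\<lambda>n. ereal (1 / real n) * lnE (Y n) \<le> ereal (ln \<theta>)) sequentially"
    using assms(2) eventually_gt_at_top[of 0]
  proof eventually_elim
    case (elim n)
    show ?case
    proof (cases "Y n \<le> 0")
      case True
      with elim show ?thesis
        by (simp add: lnE_def)
    next
      case False
      then have "ln (Y n) \<le> real n * ln \<theta>"
        using elim assms(1) by (simp add: ln_realpow[symmetric])
      with False elim show ?thesis
        by (simp add: lnE_def field_simps)
    qed
  qed
qed

lemma AE_eventually_char_point_Im_le:
  assumes "nondeg T"
  shows "AE \<omega> in choice_space.
    eventually (\<lambda>n. Im (char_point (tri_chain T \<omega> n)) \<le> (199/200) ^ n) sequentially"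
proof -
  have "(\<lambda>n. (199/200::real) ^ n) \<longlonglongrightarrow> 0"
    by (intro LIMSEQ_power_zero) simp
  then have small: "eventually (\<lambda>n. (199/200::real) ^ n < 2/3) sequentially"
    by (rule order_tendstoD) simp
  have "AE \<omega> in choice_space.
      eventually (\<lambda>n. lyapunov (tri_chain T \<omega> n) < (199/200) ^ n) sequentially"
    by (rule AE_eventually_tri_chain_less_power[OF lyapunov_nonneg sum_lyapunov_subdiv_le]) simp_all
  then show ?thesis
    using AE_choices_less_6
  proof eventually_elim
    case (elim \<omega>)
    note choices = elim(2)
    from small elim(1) show ?case
    proof eventually_elim
      case (elim n)
      let ?T = "tri_chain T \<omega> n"
      have "lyapunov ?T ^ 2 \<le> ((199/200) ^ n)^2"
        using elim(2) lyapunov_nonneg[of ?T] by (intro power_mono) auto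
      then have "3/2 * lyapunov ?T ^ 2 \<le> (3/2 * (199/200) ^ n) * (199/200) ^ n"
        by (simp add: power2_eq_square)
      also have "\<dots> \<le> (199/200) ^ n"
        using elim(1) by (simp add: mult_le_cancel_right1)
      finally show ?case
        using char_point_Im_le_lyapunov[OF nondeg_tri_chain[OF assms choices, of n]] by linarith
    qed
  qed
qed

theorem theorem1:
  shows "\<exists>c::real. c > 0 \<and>
    (\<forall>T0. nondeg T0 \<longrightarrow>
      (AE \<omega> in choice_space.
         limsup (\<lambda>n. ereal (1 / real n) * lnE (Im (char_point (tri_chain T0 \<omega> n))))
           \<le> ereal (- c)))"
proof (intro exI conjI allI impI)
  show "0 < - ln (199/200 :: real)"
    by simp
  fix T0
  assume "nondeg T0"
  from AE_eventually_char_point_Im_le[OF this]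
  show "AE \<omega> in choice_space. limsup (\<lambda>n. ereal (1 / real n) * lnE (Im (char_point (tri_chain T0 \<omega> n))))
      \<le> ereal (- (- ln (199/200)))"
    by eventually_elim (simp add: limsup_lnE_le)
qed

end
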